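(* Let $n\geq6$ and let $Z\in\mathbb{R}^{n\times4}$ be totally positive satisfying Assumption (G). For any $i,j,k\in[n]$ such that the pairs $\{i,i+1\},\{j,j+1\},\{k,k+1\}$ (indices mod $n$) are pairwise disjoint, the conic $L_{i(i+1)}\cap L_{j(j+1)}\cap L_{k(k+1)}\subset\mathrm{Gr}_{\mathbb{C}}(2,4)$ of lines meeting the three lines $Z_iZ_{i+1}$, $Z_jZ_{j+1}$, $Z_kZ_{k+1}$ does not intersect $\mathcal{A}_n(Z)$.
   Context: $Z$ totally positive: all $4\times4$ minors positive; its rows $Z_1,\dots,Z_n$ are points of $\mathbb{P}^3$. $\mathcal{A}_n(Z)\subset\mathrm{Gr}_{\mathbb{R}}(2,4)$ is the image of the totally nonnegative Grassmannian $\mathrm{Gr}(2,n)_{\ge0}$ under $\mathrm{rowspan}(X)\mapsto\mathrm{rowspan}(XZ)$. $\langle AB\,ij\rangle$ is the determinant of the matrix with rows $A,B,Z_i,Z_j$. Assumption (G): no line $AB$ has more than $4$ of $\langle AB\,i(i+1)\rangle$, $i\in[n]$ (cyclically), vanishing. *)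

theory Defs
  imports "HOL-Analysis.Analysis"
begin

definition bracket :: "real^4 \<Rightarrow> real^4 \<Rightarrow> real^4 \<Rightarrow> real^4 \<Rightarrow> real" where
  "bracket a b c d = det (\<chi> r::4. if r = 0 then a else if r = 1 then b else if r = 2 then c else d)"

definition cnext :: "nat \<Rightarrow> nat \<Rightarrow> nat" where
  "cnext n i = Suc i mod n"

definition totally_positive :: "nat \<Rightarrow> (nat \<Rightarrow> real^4) \<Rightarrow> bool" where
  "totally_positive n Z \<longleftrightarrow>
     (\<forall>i1 i2 i3 i4. i1 < i2 \<and> i2 < i3 \<and> i3 < i4 \<and> i4 < n \<longrightarrow>
        bracket (Z i1) (Z i2) (Z i3) (Z i4) > 0)"

definition lin_indep2 :: "real^4 \<Rightarrow> real^4 \<Rightarrow> bool" where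
  "lin_indep2 A B \<longleftrightarrow> (\<forall>s t. s *\<^sub>R A + t *\<^sub>R B = 0 \<longrightarrow> s = 0 \<and> t = 0)"

definition assumption_G :: "nat \<Rightarrow> (nat \<Rightarrow> real^4) \<Rightarrow> bool" where
  "assumption_G n Z \<longleftrightarrow>
     (\<forall>A B. lin_indep2 A B \<longrightarrow>
        card {i. i < n \<and> bracket A B (Z i) (Z (cnext n i)) = 0} \<le> 4)"

text \<open>The line spanned by A, B lies in the amplituhedron A_n(Z): it is the row span of XZ
  for some 2 x n matrix X (rows x, y) representing a point of Gr(2,n)_{>=0}
  (all ordered 2x2 minors nonnegative, rank 2).\<close>
definition in_amplituhedron :: "nat \<Rightarrow> (nat \<Rightarrow> real^4) \<Rightarrow> real^4 \<Rightarrow> real^4 \<Rightarrow> bool" where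
  "in_amplituhedron n Z A B \<longleftrightarrow>
     lin_indep2 A B \<and>
     (\<exists>x y :: nat \<Rightarrow> real.
        (\<forall>a b. a < b \<and> b < n \<longrightarrow> x a * y b - x b * y a \<ge> 0) \<and>
        (\<exists>a b. a < b \<and> b < n \<and> x a * y b - x b * y a \<noteq> 0) \<and>
        A = (\<Sum>c<n. x c *\<^sub>R Z c) \<and> B = (\<Sum>c<n. y c *\<^sub>R Z c))"

end

theory Submission
  imports Defs
begin

(* The Pluecker coordinates p_ab = x_a y_b - x_b y_a of a point of Gr(2,n)_{>=0} are nonnegative
   and not all zero, and <AB l l+1> = sum_{a<b} p_ab <a b l l+1>.  By total positivity, the
   brackets <a b l l+1> with {a,b} disjoint from {l,l+1} all have the same strict sign, so
   <AB l l+1> = 0 forces every pair {a,b} in the support of p to meet {l,l+1}.  But a pair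
   cannot meet three pairwise disjoint pairs. *)

lemma eq_3_if_not_0_1_2: "(r::4) \<noteq> 0 \<Longrightarrow> r \<noteq> 1 \<Longrightarrow> r \<noteq> 2 \<Longrightarrow> r = 3"
  using exhaust_4[of r] by auto

lemma det_swap_rows:
  fixes f g :: "'n::finite \<Rightarrow> 'a::comm_ring_1^'n"
  assumes "p \<noteq> q" and "\<And>r. g r = f (Transposition.transpose p q r)"
  shows "det (\<chi> r. g r) = - det (\<chi> r. f r)"
proof -
  have "det (\<chi> r. g r) = det (\<chi> r. (\<chi> r. f r) $ Transposition.transpose p q r)"
    using assms(2) by simp
  also have "\<dots> = of_int (sign (Transposition.transpose p q)) * det (\<chi> r. f r)"
    by (rule det_permute_rows) (simp add: permutes_swap_id)
  finally show ?thesis using assms(1) by (simp add: sign_swap_id)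
qed

lemma bracket_swap_ab: "bracket b a c d = - bracket a b c d"
  unfolding bracket_def
  by (rule det_swap_rows[of 0 1]) (auto simp: transpose_def dest: eq_3_if_not_0_1_2)

lemma bracket_swap_bc: "bracket a c b d = - bracket a b c d"
  unfolding bracket_def
  by (rule det_swap_rows[of 1 2]) (auto simp: transpose_def dest: eq_3_if_not_0_1_2)

lemma bracket_swap_cd: "bracket a b d c = - bracket a b c d"
  unfolding bracket_def
  by (rule det_swap_rows[of 2 3]) (auto simp: transpose_def dest: eq_3_if_not_0_1_2)

lemma bracket_eq_0_if_not_distinct:
  assumes "\<not> distinct [a, b, c, d]"
  shows "bracket a b c d = 0"
proof -
  have "a = b \<or> a = c \<or> a = d \<or> b = c \<or> b = d \<or> c = d"
    using assms by auto
  then show ?thesis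
    unfolding bracket_def
    by (elim disjE)
      (rule det_identical_rows[of 0 1] det_identical_rows[of 0 2] det_identical_rows[of 0 3]
         det_identical_rows[of 1 2] det_identical_rows[of 1 3] det_identical_rows[of 2 3];
       simp add: row_def vec_eq_iff)+
qed

lemma bracket_scaleR_left: "bracket (t *\<^sub>R u) b c d = t * bracket u b c d"
proof -
  have smult: "t *s u = t *\<^sub>R u"
    by (simp add: vec_eq_iff)
  show ?thesis
    unfolding bracket_def
    using det_row_mul[of 0 t "\<lambda>_. u" "\<lambda>r. if r = 1 then b else if r = 2 then c else d"]
    unfolding smult by simp
qed

lemma bracket_lincomb_left:
  assumes "finite S"
  shows "bracket (\<Sum>s\<in>S. x s *\<^sub>R v s) b c d = (\<Sum>s\<in>S. x s * bracket (v s) b c d)"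
proof -
  have "bracket (\<Sum>s\<in>S. x s *\<^sub>R v s) b c d = (\<Sum>s\<in>S. bracket (x s *\<^sub>R v s) b c d)"
    unfolding bracket_def
    using det_linear_row_sum[OF assms, of 0 "\<lambda>_ s. x s *\<^sub>R v s"
        "\<lambda>r. if r = 1 then b else if r = 2 then c else d"]
    by simp
  then show ?thesis
    by (simp add: bracket_scaleR_left)
qed

lemma bracket_lincomb_right:
  assumes "finite S"
  shows "bracket a (\<Sum>s\<in>S. x s *\<^sub>R v s) c d = (\<Sum>s\<in>S. x s * bracket a (v s) c d)"
  using bracket_lincomb_left[OF assms, of x v a c d]
  by (simp add: bracket_swap_ab[of a] sum_negf[symmetric])

lemma sum_alternating_eq_pluecker:
  fixes g :: "nat \<Rightarrow> nat \<Rightarrow> 'a::comm_ring"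
  assumes alt: "\<And>a. g a a = 0" and antisym: "\<And>a b. g b a = - g a b"
  shows "(\<Sum>a<n. \<Sum>b<n. x a * y b * g a b) =
    (\<Sum>a<n. \<Sum>b<n. if a < b then (x a * y b - x b * y a) * g a b else 0)"
proof (induction n)
  case 0
  then show ?case by simp
next
  case (Suc n)
  have "(\<Sum>a<Suc n. \<Sum>b<Suc n. x a * y b * g a b) =
      (\<Sum>a<n. \<Sum>b<n. x a * y b * g a b) + (\<Sum>a<n. x a * y n * g a n) + (\<Sum>b<n. x n * y b * g n b)"
    by (simp add: sum.distrib alt)
  also have "(\<Sum>b<n. x n * y b * g n b) = - (\<Sum>a<n. x n * y a * g a n)"
    by (simp add: antisym[of _ n] sum_negf[symmetric])
  finally show ?case
    using Suc.IH by (simp add: sum.distrib algebra_simps sum_subtractf)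
qed

lemma bracket_span_pluecker:
  fixes n :: nat
  shows "bracket (\<Sum>c<n. x c *\<^sub>R Z c) (\<Sum>c<n. y c *\<^sub>R Z c) p q =
    (\<Sum>a<n. \<Sum>b<n. if a < b then (x a * y b - x b * y a) * bracket (Z a) (Z b) p q else 0)"
proof -
  have "bracket (\<Sum>c<n. x c *\<^sub>R Z c) (\<Sum>c<n. y c *\<^sub>R Z c) p q =
      (\<Sum>a<n. x a * bracket (Z a) (\<Sum>c<n. y c *\<^sub>R Z c) p q)"
    by (rule bracket_lincomb_left) simp
  also have "\<dots> = (\<Sum>a<n. \<Sum>b<n. x a * y b * bracket (Z a) (Z b) p q)"
    by (simp add: bracket_lincomb_right sum_distrib_left mult.assoc)
  also have "\<dots> =
      (\<Sum>a<n. \<Sum>b<n. if a < b then (x a * y b - x b * y a) * bracket (Z a) (Z b) p q else 0)"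
    by (rule sum_alternating_eq_pluecker[where g = "\<lambda>a b. bracket (Z a) (Z b) p q"])
       (simp add: bracket_eq_0_if_not_distinct, rule bracket_swap_ab)
  finally show ?thesis .
qed

(* The sign is -1 only for the wrap-around pair (n-1, 0): moving Z 0 to the front of
   <a b (n-1) 0> takes three transpositions. *)
lemma adjacent_brackets_same_sign:
  assumes tp: "totally_positive n Z" and l: "l < n"
  obtains s :: real where
    "\<And>a b. a < b \<Longrightarrow> b < n \<Longrightarrow> {a, b} \<inter> {l, cnext n l} = {} \<Longrightarrow>
      s * bracket (Z a) (Z b) (Z l) (Z (cnext n l)) > 0"
proof (cases "Suc l < n")
  case True
  then have next_l: "cnext n l = Suc l"
    by (simp add: cnext_def)
  have "bracket (Z a) (Z b) (Z l) (Z (Suc l)) > 0"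
    if ab: "a < b" "b < n" and disj: "{a, b} \<inter> {l, Suc l} = {}" for a b
  proof -
    have "b < l \<or> (a < l \<and> Suc l < b) \<or> Suc l < a"
      using ab disj by auto
    moreover have ?thesis if "b < l"
      using tp that ab True unfolding totally_positive_def by auto
    moreover have ?thesis if "a < l" "Suc l < b"
      using tp that ab
        bracket_swap_bc[of "Z a" "Z b" "Z l" "Z (Suc l)"]
        bracket_swap_cd[of "Z a" "Z l" "Z b" "Z (Suc l)"]
      unfolding totally_positive_def by auto
    moreover have ?thesis if "Suc l < a"
      using tp that ab
        bracket_swap_bc[of "Z a" "Z b" "Z l" "Z (Suc l)"]
        bracket_swap_ab[of "Z a" "Z l" "Z b" "Z (Suc l)"]
        bracket_swap_cd[of "Z l" "Z a" "Z b" "Z (Suc l)"]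
        bracket_swap_bc[of "Z l" "Z a" "Z (Suc l)" "Z b"]
      unfolding totally_positive_def by auto
    ultimately show ?thesis
      by blast
  qed
  then show ?thesis
    using that[of 1] next_l by simp
next
  case False
  then have l_last: "Suc l = n"
    using l by simp
  then have next_l: "cnext n l = 0"
    by (auto simp: cnext_def)
  have "bracket (Z a) (Z b) (Z l) (Z 0) < 0"
    if ab: "a < b" "b < n" and disj: "{a, b} \<inter> {l, 0} = {}" for a b
  proof -
    have "0 < a" "b < l"
      using ab disj l_last by auto
    then show ?thesis
      using tp ab l_last
        bracket_swap_cd[of "Z a" "Z b" "Z l" "Z 0"]
        bracket_swap_bc[of "Z a" "Z b" "Z 0" "Z l"]
        bracket_swap_ab[of "Z a" "Z 0" "Z b" "Z l"]
      unfolding totally_positive_def by auto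
  qed
  then show ?thesis
    using that[of "-1"] next_l by simp
qed

lemma adjacent_bracket_combination_eq_0_imp_meets:
  assumes tp: "totally_positive n Z" and l: "l < n"
    and nonneg: "\<And>a b. a < b \<Longrightarrow> b < n \<Longrightarrow> p a b \<ge> 0"
    and eq_0: "(\<Sum>a<n. \<Sum>b<n.
      if a < b then p a b * bracket (Z a) (Z b) (Z l) (Z (cnext n l)) else 0) = 0"
    and ab: "a0 < b0" "b0 < n" and nz: "p a0 b0 \<noteq> 0"
  shows "{a0, b0} \<inter> {l, cnext n l} \<noteq> {}"
proof
  assume disj: "{a0, b0} \<inter> {l, cnext n l} = {}"
  obtain s where s: "\<And>a b. a < b \<Longrightarrow> b < n \<Longrightarrow> {a, b} \<inter> {l, cnext n l} = {} \<Longrightarrow>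
      s * bracket (Z a) (Z b) (Z l) (Z (cnext n l)) > 0"
    by (rule adjacent_brackets_same_sign[OF tp l]) (rule that)
  define T where
    "T a b = (if a < b then p a b * (s * bracket (Z a) (Z b) (Z l) (Z (cnext n l))) else 0)" for a b
  have T_nonneg: "T a b \<ge> 0" if "b < n" for a b
  proof (cases "a < b")
    case a_b: True
    show ?thesis
    proof (cases "{a, b} \<inter> {l, cnext n l} = {}")
      case True
      then show ?thesis
        using s[OF a_b that] nonneg[OF a_b that] a_b by (simp add: T_def)
    next
      case False
      then have "\<not> distinct [Z a, Z b, Z l, Z (cnext n l)]"
        by auto
      then show ?thesis
        by (simp add: T_def bracket_eq_0_if_not_distinct)
    qed
  qed (simp add: T_def)
  have "(\<Sum>a<n. \<Sum>b<n. T a b) = s * (\<Sum>a<n. \<Sum>b<n.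
      if a < b then p a b * bracket (Z a) (Z b) (Z l) (Z (cnext n l)) else 0)"
    unfolding T_def sum_distrib_left by (intro sum.cong refl) simp
  then have "(\<Sum>a<n. \<Sum>b<n. T a b) = 0"
    using eq_0 by simp
  moreover have "(\<Sum>b<n. T a b) \<ge> 0" for a
    by (intro sum_nonneg T_nonneg) simp
  ultimately have "(\<Sum>b<n. T a0 b) = 0"
    using ab by (simp add: sum_nonneg_eq_0_iff)
  then have "T a0 b0 = 0"
    using ab by (subst (asm) sum_nonneg_eq_0_iff) (auto simp: T_nonneg)
  moreover have "T a0 b0 > 0"
    using s[OF ab disj] nonneg[OF ab] nz ab by (simp add: T_def)
  ultimately show False
    by simp
qed

lemma pair_disjoint_if_meets_two_disjoint:
  assumes "P \<inter> Q = {}" "P \<inter> R = {}" "Q \<inter> R = {}"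
    and "{a, b} \<inter> P \<noteq> {}" "{a, b} \<inter> Q \<noteq> {}"
  shows "{a, b} \<inter> R = {}"
  using assms by blast

theorem lemma4p6:
  fixes n :: nat and Z :: "nat \<Rightarrow> real^4" and i j k :: nat
  assumes "n \<ge> 6"
    and "totally_positive n Z"
    and "assumption_G n Z"
    and "i < n" and "j < n" and "k < n"
    and "{i, cnext n i} \<inter> {j, cnext n j} = {}"
    and "{i, cnext n i} \<inter> {k, cnext n k} = {}"
    and "{j, cnext n j} \<inter> {k, cnext n k} = {}"
  shows "\<not> (\<exists>A B. in_amplituhedron n Z A B \<and>
               bracket A B (Z i) (Z (cnext n i)) = 0 \<and>
               bracket A B (Z j) (Z (cnext n j)) = 0 \<and>
               bracket A B (Z k) (Z (cnext n k)) = 0)"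
proof
  assume "\<exists>A B. in_amplituhedron n Z A B \<and>
               bracket A B (Z i) (Z (cnext n i)) = 0 \<and>
               bracket A B (Z j) (Z (cnext n j)) = 0 \<and>
               bracket A B (Z k) (Z (cnext n k)) = 0"
  then obtain A B where amp: "in_amplituhedron n Z A B"
    and zero_i: "bracket A B (Z i) (Z (cnext n i)) = 0"
    and zero_j: "bracket A B (Z j) (Z (cnext n j)) = 0"
    and zero_k: "bracket A B (Z k) (Z (cnext n k)) = 0"
    by blast
  from amp obtain x y where
    nonneg: "\<And>a b. a < b \<Longrightarrow> b < n \<Longrightarrow> x a * y b - x b * y a \<ge> 0"
    and nz: "\<exists>a b. a < b \<and> b < n \<and> x a * y b - x b * y a \<noteq> 0"
    and A: "A = (\<Sum>c<n. x c *\<^sub>R Z c)" and B: "B = (\<Sum>c<n. y c *\<^sub>R Z c)"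
    unfolding in_amplituhedron_def by blast
  from nz obtain a b where ab: "a < b" "b < n" and nz_ab: "x a * y b - x b * y a \<noteq> 0"
    by blast
  have meets: "{a, b} \<inter> {l, cnext n l} \<noteq> {}"
    if "l < n" and "bracket A B (Z l) (Z (cnext n l)) = 0" for l
  proof (rule adjacent_bracket_combination_eq_0_imp_meets[where p = "\<lambda>a b. x a * y b - x b * y a"])
    show "(\<Sum>a<n. \<Sum>b<n. if a < b
        then (x a * y b - x b * y a) * bracket (Z a) (Z b) (Z l) (Z (cnext n l)) else 0) = 0"
      using that(2) by (simp only: A B bracket_span_pluecker)
  qed (use assms(2) that(1) nonneg ab nz_ab in auto)
  show False
    using pair_disjoint_if_meets_two_disjoint[OF assms(7-9)
        meets[OF assms(4) zero_i] meets[OF assms(5) zero_j]]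
      meets[OF assms(6) zero_k]
    by contradiction
qed

end
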